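(* Let $A=(A_1,\dots,A_d)$ take values in $\{0,1\}^d$ with probabilities $p(a)>0$ for all $a$. For each nonempty $b\subseteq V=\{1,\dots,d\}$ let $p_b$ be the marginal distribution of $(A_v)_{v\in b}$ and define the multivariate logistic parameter $$\eta_b = 2^{-|b|}\sum_{a_b\in\{0,1\}^{|b|}} (-1)^{\sum_{v\in b}a_v}\log p_b(a_b),$$ i.e. the highest-order log-linear interaction (in effect coding) of the marginal distribution of $(A_v)_{v\in b}$. Then $p$ is palindromic, i.e. $p(a)=p(\sim a)$ for all $a$, if and only if $\eta_b=0$ for all $b\subseteq V$ with $|b|$ odd.
   Context: $\sim a$ denotes the complement of the binary vector $a$, i.e. $(\sim a)_v=1-a_v$. $|b|$ denotes the cardinality of the subset $b$. *)

theory Defs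
  imports "HOL-Library.FuncSet" Complex_Main
begin

definition binvecs :: "nat set \<Rightarrow> (nat \<Rightarrow> nat) set" where
  "binvecs I = I \<rightarrow>\<^sub>E {0, 1}"

definition bcompl :: "nat set \<Rightarrow> (nat \<Rightarrow> nat) \<Rightarrow> (nat \<Rightarrow> nat)" where
  "bcompl V a = restrict (\<lambda>v. 1 - a v) V"

definition marginal :: "nat set \<Rightarrow> ((nat \<Rightarrow> nat) \<Rightarrow> real) \<Rightarrow> nat set \<Rightarrow> (nat \<Rightarrow> nat) \<Rightarrow> real" where
  "marginal V p b c = (\<Sum>a\<in>{a \<in> binvecs V. restrict a b = c}. p a)"

definition eta :: "nat set \<Rightarrow> ((nat \<Rightarrow> nat) \<Rightarrow> real) \<Rightarrow> nat set \<Rightarrow> real" where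
  "eta V p b = (1 / 2 ^ card b) *
     (\<Sum>c\<in>binvecs b. (-1) ^ (\<Sum>v\<in>b. c v) * ln (marginal V p b c))"

definition palindromic :: "nat set \<Rightarrow> ((nat \<Rightarrow> nat) \<Rightarrow> real) \<Rightarrow> bool" where
  "palindromic V p \<longleftrightarrow> (\<forall>a\<in>binvecs V. p a = p (bcompl V a))"

end

theory Submission
  imports Defs
begin

text \<open>Put \<open>D c = p\<^sub>b(c) - p\<^sub>b(\<sim>c)\<close> for the marginal \<open>p\<^sub>b\<close>. Marginalising over a coordinate
  \<open>v \<in> b\<close> shows that, once all marginals of size \<open>|b| - 1\<close> are palindromic, flipping one
  coordinate of \<open>c\<close> changes the sign of \<open>D c\<close>; hence \<open>D c = (-1)\<^bsup>|c|\<^esup> D 0\<close>. Consequently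
  \<open>\<Sum>\<^sub>c D c (log p\<^sub>b(c) - log p\<^sub>b(\<sim>c))\<close> is \<open>D 0\<close> times \<open>(1 - (-1)\<^bsup>|b|\<^esup>) 2\<^bsup>|b|\<^esup> \<eta>\<^sub>b\<close>, which vanishes
  when \<open>\<eta>\<^sub>b = 0\<close> for odd \<open>|b|\<close>. All summands are non-negative since \<open>log\<close> is monotone, so
  they all vanish and \<open>p\<^sub>b\<close> is palindromic; induction on \<open>|b|\<close> up to \<open>b = V\<close> gives one
  direction. Conversely, complementation is a bijection of \<open>{0,1}\<^sup>b\<close> multiplying the sign
  by \<open>(-1)\<^bsup>|b|\<^esup>\<close>, so for odd \<open>|b|\<close> the alternating sum defining \<open>\<eta>\<^sub>b\<close> is its own negative.\<close>

definition alt_sum :: "nat set \<Rightarrow> ((nat \<Rightarrow> nat) \<Rightarrow> real) \<Rightarrow> real" where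
  "alt_sum I f = (\<Sum>c\<in>binvecs I. (-1) ^ (\<Sum>v\<in>I. c v) * f c)"

lemma eta_eq_0_iff: "eta V p b = 0 \<longleftrightarrow> alt_sum b (\<lambda>c. ln (marginal V p b c)) = 0"
  by (simp add: eta_def alt_sum_def)

lemma finite_binvecs: "finite I \<Longrightarrow> finite (binvecs I)"
  by (simp add: binvecs_def finite_PiE)

lemma binvecs_le_1: "c \<in> binvecs I \<Longrightarrow> v \<in> I \<Longrightarrow> c v \<le> 1"
  by (auto simp: binvecs_def PiE_iff)

lemma binvecs_extensional: "c \<in> binvecs I \<Longrightarrow> c \<in> extensional I"
  by (auto simp: binvecs_def PiE_def)

lemma restrict_eq_iff: "e \<in> extensional J \<Longrightarrow> restrict a J = e \<longleftrightarrow> (\<forall>w\<in>J. a w = e w)"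
  by (auto simp: extensional_def fun_eq_iff)

lemma restrict_in_binvecs: "c \<in> binvecs I \<Longrightarrow> J \<subseteq> I \<Longrightarrow> restrict c J \<in> binvecs J"
  by (auto simp: binvecs_def PiE_iff)

lemma flip_in_binvecs: "c \<in> binvecs I \<Longrightarrow> v \<in> I \<Longrightarrow> c(v := 1 - c v) \<in> binvecs I"
  by (auto simp: binvecs_def PiE_iff extensional_def)

lemma bcompl_in_binvecs: "c \<in> binvecs I \<Longrightarrow> bcompl I c \<in> binvecs I"
  by (auto simp: binvecs_def bcompl_def)

lemma bcompl_bcompl: "c \<in> binvecs I \<Longrightarrow> bcompl I (bcompl I c) = c"
  using binvecs_le_1[of c I] binvecs_extensional[of c I]
  by (auto simp: bcompl_def fun_eq_iff extensional_def)

lemma bcompl_flip: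
  "c \<in> binvecs I \<Longrightarrow> v \<in> I \<Longrightarrow> bcompl I (c(v := 1 - c v)) = (bcompl I c)(v := 1 - bcompl I c v)"
  using binvecs_le_1[of c I v] by (auto simp: bcompl_def fun_eq_iff)

lemma restrict_bcompl: "J \<subseteq> I \<Longrightarrow> restrict (bcompl I c) J = bcompl J (restrict c J)"
  by (auto simp: bcompl_def fun_eq_iff)

lemma sum_bcompl_add:
  assumes "c \<in> binvecs I"
  shows "(\<Sum>v\<in>I. bcompl I c v) + (\<Sum>v\<in>I. c v) = card I"
proof -
  have "(\<Sum>v\<in>I. bcompl I c v) + (\<Sum>v\<in>I. c v) = (\<Sum>v\<in>I. 1)"
    unfolding sum.distrib[symmetric]
    by (rule sum.cong) (use binvecs_le_1[OF assms] in \<open>auto simp: bcompl_def\<close>)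
  then show ?thesis by simp
qed

lemma alt_sum_bcompl:
  assumes "finite I"
  shows "alt_sum I (\<lambda>c. f (bcompl I c)) = (-1) ^ card I * alt_sum I f"
proof -
  have sign: "(-1::real) ^ (\<Sum>v\<in>I. bcompl I c v) = (-1) ^ card I * (-1) ^ (\<Sum>v\<in>I. c v)"
    if "c \<in> binvecs I" for c
  proof -
    have "(-1::real) ^ card I * (-1) ^ (\<Sum>v\<in>I. c v)
        = (-1) ^ (\<Sum>v\<in>I. bcompl I c v) * ((-1) ^ (\<Sum>v\<in>I. c v))\<^sup>2"
      by (simp flip: sum_bcompl_add[OF that] add: power_add power2_eq_square)
    then show ?thesis by (simp add: power_even_eq[symmetric])
  qed
  have "alt_sum I (\<lambda>c. f (bcompl I c)) = (\<Sum>c\<in>binvecs I. (-1) ^ (\<Sum>v\<in>I. bcompl I c v) * f c)"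
    unfolding alt_sum_def
    by (rule sum.reindex_bij_witness[of _ "bcompl I" "bcompl I"])
       (auto simp: bcompl_bcompl bcompl_in_binvecs)
  also have "\<dots> = (-1) ^ card I * alt_sum I f"
    by (simp add: alt_sum_def sign sum_distrib_left mult.assoc cong: sum.cong)
  finally show ?thesis .
qed

lemma alt_sum_eq_0_if_palindromic:
  assumes "finite I" "odd (card I)" "palindromic I f"
  shows "alt_sum I (\<lambda>c. g (f c)) = 0"
proof -
  have "alt_sum I (\<lambda>c. g (f (bcompl I c))) = alt_sum I (\<lambda>c. g (f c))"
    using assms(3) by (simp add: alt_sum_def palindromic_def cong: sum.cong)
  then show ?thesis
    using alt_sum_bcompl[OF assms(1), of "\<lambda>c. g (f c)"] assms(2) by simp
qed

lemma flip_antisymmetric_sign: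
  fixes D :: "(nat \<Rightarrow> nat) \<Rightarrow> real"
  assumes "finite I"
    and flip: "\<And>c v. c \<in> binvecs I \<Longrightarrow> v \<in> I \<Longrightarrow> D c + D (c(v := 1 - c v)) = 0"
    and "c \<in> binvecs I"
  shows "D c = (-1) ^ (\<Sum>v\<in>I. c v) * D (restrict (\<lambda>_. 0) I)"
  using \<open>c \<in> binvecs I\<close>
proof (induction "\<Sum>v\<in>I. c v" arbitrary: c)
  case 0
  then have "c = restrict (\<lambda>_. 0) I"
    using \<open>finite I\<close> binvecs_extensional[of c I] by (auto simp: fun_eq_iff extensional_def)
  then show ?case by (simp add: 0(1)[symmetric])
next
  case (Suc n)
  then obtain v where v: "v \<in> I" and "c v \<noteq> 0"
    by (metis sum.neutral nat.distinct(1))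
  then have "c v = 1"
    using binvecs_le_1[OF Suc.prems v(1)] by linarith
  let ?c' = "c(v := 1 - c v)"
  have "(\<Sum>w\<in>I - {v}. ?c' w) = (\<Sum>w\<in>I - {v}. c w)"
    by (rule sum.cong) auto
  then have "(\<Sum>w\<in>I. c w) = (\<Sum>w\<in>I. ?c' w) + 1"
    using sum.remove[OF \<open>finite I\<close> v(1), of c] sum.remove[OF \<open>finite I\<close> v(1), of ?c'] \<open>c v = 1\<close>
    by simp
  then have "D ?c' = (-1) ^ n * D (restrict (\<lambda>_. 0) I)"
    using Suc flip_in_binvecs[OF Suc.prems v(1)] by simp
  then show ?case
    using flip[OF Suc.prems v(1)] Suc.hyps(2)[symmetric] by simp
qed

lemma diff_mult_ln_diff_nonneg: "(x::real) > 0 \<Longrightarrow> y > 0 \<Longrightarrow> 0 \<le> (x - y) * (ln x - ln y)"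
  by (cases "x \<le> y") (auto intro: mult_nonpos_nonpos)

lemma diff_mult_ln_diff_eq_0_iff: "(x::real) > 0 \<Longrightarrow> y > 0 \<Longrightarrow> (x - y) * (ln x - ln y) = 0 \<longleftrightarrow> x = y"
  by auto

lemma palindromic_if_flip_antisymmetric:
  fixes I :: "nat set" and P :: "(nat \<Rightarrow> nat) \<Rightarrow> real"
  defines "D \<equiv> \<lambda>c. P c - P (bcompl I c)"
  assumes "finite I"
    and pos: "\<And>c. c \<in> binvecs I \<Longrightarrow> P c > 0"
    and flip: "\<And>c v. c \<in> binvecs I \<Longrightarrow> v \<in> I \<Longrightarrow> D c + D (c(v := 1 - c v)) = 0"
    and odd: "odd (card I) \<Longrightarrow> alt_sum I (\<lambda>c. ln (P c)) = 0"
  shows "palindromic I P"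
proof -
  define z where "z = restrict (\<lambda>_. 0::nat) I"
  define A where "A = alt_sum I (\<lambda>c. ln (P c))"
  have "(\<Sum>c\<in>binvecs I. D c * (ln (P c) - ln (P (bcompl I c))))
      = (\<Sum>c\<in>binvecs I. D z * ((-1) ^ (\<Sum>v\<in>I. c v) * ln (P c)
          - (-1) ^ (\<Sum>v\<in>I. c v) * ln (P (bcompl I c))))"
  proof (rule sum.cong[OF refl])
    fix c assume "c \<in> binvecs I"
    from flip_antisymmetric_sign[where D = D, OF \<open>finite I\<close> flip this, folded z_def]
    show "D c * (ln (P c) - ln (P (bcompl I c)))
        = D z * ((-1) ^ (\<Sum>v\<in>I. c v) * ln (P c) - (-1) ^ (\<Sum>v\<in>I. c v) * ln (P (bcompl I c)))"
      by (simp add: algebra_simps)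
  qed
  also have "\<dots> = D z * (A - alt_sum I (\<lambda>c. ln (P (bcompl I c))))"
    by (simp only: A_def alt_sum_def sum_subtractf[symmetric] sum_distrib_left)
  also have "\<dots> = D z * (A - (-1) ^ card I * A)"
    by (simp only: alt_sum_bcompl[OF \<open>finite I\<close>, of "\<lambda>c. ln (P c)"] A_def)
  also have "\<dots> = 0"
    using odd by (cases "odd (card I)") (simp_all add: A_def)
  finally have "(\<Sum>c\<in>binvecs I. D c * (ln (P c) - ln (P (bcompl I c)))) = 0" .
  moreover have "0 \<le> D c * (ln (P c) - ln (P (bcompl I c)))" if "c \<in> binvecs I" for c
    unfolding D_def by (simp add: diff_mult_ln_diff_nonneg pos that bcompl_in_binvecs)
  ultimately have "\<forall>c\<in>binvecs I. D c * (ln (P c) - ln (P (bcompl I c))) = 0"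
    by (subst (asm) sum_nonneg_eq_0_iff[OF finite_binvecs[OF \<open>finite I\<close>]]) auto
  then show ?thesis
    unfolding palindromic_def D_def
    by (simp add: diff_mult_ln_diff_eq_0_iff pos bcompl_in_binvecs)
qed

lemma marginal_pos:
  assumes "finite V" "\<forall>a\<in>binvecs V. p a > 0" "b \<subseteq> V" "c \<in> binvecs b"
  shows "marginal V p b c > 0"
proof -
  define a where "a = restrict (\<lambda>v. if v \<in> b then c v else 0) V"
  have "a \<in> binvecs V"
    using assms(3,4) by (auto simp: a_def binvecs_def PiE_iff)
  moreover have "restrict a b = c"
    using assms(3) binvecs_extensional[OF assms(4)]
    by (auto simp: a_def fun_eq_iff extensional_def)
  ultimately have "a \<in> {a \<in> binvecs V. restrict a b = c}"
    by simp
  then show ?thesis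
    unfolding marginal_def using assms(1,2) finite_binvecs
    by (intro sum_pos2) auto
qed

lemma marginal_flip_add:
  assumes "finite V" "b \<subseteq> V" "v \<in> b" "c \<in> binvecs b"
  shows "marginal V p b c + marginal V p b (c(v := 1 - c v))
       = marginal V p (b - {v}) (restrict c (b - {v}))"
proof -
  let ?c' = "c(v := 1 - c v)"
  let ?A = "{a \<in> binvecs V. restrict a (b - {v}) = restrict c (b - {v})}"
  let ?A1 = "{a \<in> binvecs V. restrict a b = c}"
  let ?A2 = "{a \<in> binvecs V. restrict a b = ?c'}"
  have ext: "c \<in> extensional b" "?c' \<in> extensional b"
    using binvecs_extensional flip_in_binvecs assms(3,4) by blast+
  have "c v \<le> 1"
    using binvecs_le_1 assms(3,4) by blast
  have "?A = ?A1 \<union> ?A2"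
  proof (rule subset_antisym; rule subsetI)
    fix a assume "a \<in> ?A"
    then have a: "a \<in> binvecs V" and agree: "\<And>w. w \<in> b \<Longrightarrow> w \<noteq> v \<Longrightarrow> a w = c w"
      by (auto simp: restrict_eq_iff)
    have "a v \<le> 1"
      using binvecs_le_1[OF a] assms(2,3) by blast
    then have "a v = c v \<or> a v = ?c' v"
      using \<open>c v \<le> 1\<close> by simp arith
    then have "restrict a b = c \<or> restrict a b = ?c'"
      unfolding restrict_eq_iff[OF ext(1)] restrict_eq_iff[OF ext(2)] using agree by (metis fun_upd_other)
    then show "a \<in> ?A1 \<union> ?A2"
      using a by blast
  next
    fix a assume "a \<in> ?A1 \<union> ?A2"
    then show "a \<in> ?A"
      using ext by (auto simp: restrict_eq_iff split: if_split_asm)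
  qed
  moreover have "c v \<noteq> 1 - c v"
    by arith
  then have "c \<noteq> ?c'"
    by (metis fun_upd_same)
  then have "?A1 \<inter> ?A2 = {}"
    by blast
  ultimately show ?thesis
    unfolding marginal_def using finite_binvecs[OF assms(1)]
    by (simp add: sum.union_disjoint)
qed

lemma marginal_self: "c \<in> binvecs V \<Longrightarrow> marginal V p V c = p c"
proof -
  assume c: "c \<in> binvecs V"
  have "{a \<in> binvecs V. restrict a V = c} = {c}"
    using c binvecs_extensional[of _ V] by (auto simp: extensional_restrict)
  then show ?thesis by (simp add: marginal_def)
qed

lemma palindromic_marginal:
  assumes pal: "palindromic V p" and "b \<subseteq> V"
  shows "palindromic b (marginal V p b)"
  unfolding palindromic_def
proof
  fix c assume c: "c \<in> binvecs b"
  show "marginal V p b c = marginal V p b (bcompl b c)"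
    unfolding marginal_def
  proof (rule sum.reindex_bij_witness[of _ "bcompl V" "bcompl V"])
    fix a assume a: "a \<in> {a \<in> binvecs V. restrict a b = c}"
    then show "bcompl V (bcompl V a) = a"
      by (simp add: bcompl_bcompl)
    show "bcompl V a \<in> {a \<in> binvecs V. restrict a b = bcompl b c}"
      using a bcompl_in_binvecs restrict_bcompl[OF \<open>b \<subseteq> V\<close>, of a] by auto
    show "p (bcompl V a) = p a"
      using pal a unfolding palindromic_def by auto
  next
    fix a assume a: "a \<in> {a \<in> binvecs V. restrict a b = bcompl b c}"
    then show "bcompl V (bcompl V a) = a"
      by (simp add: bcompl_bcompl)
    show "bcompl V a \<in> {a \<in> binvecs V. restrict a b = c}"
      using a bcompl_in_binvecs restrict_bcompl[OF \<open>b \<subseteq> V\<close>, of a] bcompl_bcompl[OF c] by auto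
  qed
qed

lemma eta_eq_0_if_palindromic:
  assumes "finite V" "palindromic V p" "b \<subseteq> V" "odd (card b)"
  shows "eta V p b = 0"
proof -
  have "finite b"
    using assms(1,3) finite_subset by blast
  with assms show ?thesis
    unfolding eta_eq_0_iff by (intro alt_sum_eq_0_if_palindromic palindromic_marginal)
qed

lemma palindromic_marginal_if_eta_odd_eq_0:
  assumes "finite V" "\<forall>a\<in>binvecs V. p a > 0"
    and eta: "\<forall>b. b \<subseteq> V \<and> odd (card b) \<longrightarrow> eta V p b = 0"
  shows "b \<subseteq> V \<Longrightarrow> palindromic b (marginal V p b)"
proof (induction "card b" arbitrary: b rule: less_induct)
  case less
  have "finite b" using less.prems \<open>finite V\<close> finite_subset by blast
  show ?case
  proof (rule palindromic_if_flip_antisymmetric[OF \<open>finite b\<close>])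
    show "marginal V p b c > 0" if "c \<in> binvecs b" for c
      using marginal_pos[OF assms(1,2) less.prems that] .
    show "odd (card b) \<Longrightarrow> alt_sum b (\<lambda>c. ln (marginal V p b c)) = 0"
      using eta less.prems by (simp add: eta_eq_0_iff)
  next
    fix c v assume c: "c \<in> binvecs b" and v: "v \<in> b"
    let ?M = "marginal V p (b - {v})"
    have "palindromic (b - {v}) ?M"
      using less.hyps[of "b - {v}"] less.prems \<open>finite b\<close> v by (meson card_Diff1_less Diff_subset subset_trans)
    then have "?M (restrict (bcompl b c) (b - {v})) = ?M (restrict c (b - {v}))"
      using restrict_in_binvecs[OF c, of "b - {v}"]
      by (auto simp: palindromic_def restrict_bcompl)
    then show "marginal V p b c - marginal V p b (bcompl b c)
        + (marginal V p b (c(v := 1 - c v)) - marginal V p b (bcompl b (c(v := 1 - c v)))) = 0"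
      unfolding bcompl_flip[OF c v]
      using marginal_flip_add[OF assms(1) less.prems v c, of p]
        marginal_flip_add[OF assms(1) less.prems v bcompl_in_binvecs[OF c], of p]
      by linarith
  qed
qed

theorem proposition2p3:
  fixes d :: nat and p :: "(nat \<Rightarrow> nat) \<Rightarrow> real"
  assumes pos: "\<forall>a\<in>binvecs {1..d}. p a > 0"
    and sum1: "(\<Sum>a\<in>binvecs {1..d}. p a) = 1"
  shows "palindromic {1..d} p \<longleftrightarrow>
           (\<forall>b. b \<subseteq> {1..d} \<and> odd (card b) \<longrightarrow> eta {1..d} p b = 0)"
proof
  assume "palindromic {1..d} p"
  then show "\<forall>b. b \<subseteq> {1..d} \<and> odd (card b) \<longrightarrow> eta {1..d} p b = 0"
    using eta_eq_0_if_palindromic[of "{1..d}"] by simp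
next
  assume "\<forall>b. b \<subseteq> {1..d} \<and> odd (card b) \<longrightarrow> eta {1..d} p b = 0"
  then have "palindromic {1..d} (marginal {1..d} p {1..d})"
    using palindromic_marginal_if_eta_odd_eq_0[OF _ pos] by blast
  then show "palindromic {1..d} p"
    by (simp add: palindromic_def marginal_self bcompl_in_binvecs)
qed

end
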